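(* For every $\varepsilon>0$ there exists $C_\varepsilon>0$ (independent of $N$) such that for any $A\subset\mathbb{Z}^2$ with $|A|\le|\{p\in\mathbb{Z}^2:|p|\le2k_{\mathrm F}\}|$, $$\hbar^2\sum_{p\in A}e(p)^{-1}\le C_\varepsilon N^\varepsilon.$$
   Context: $N=|B_{\mathrm F}|$ with $B_{\mathrm F}=\{k\in\mathbb{Z}^2:|k|<k_{\mathrm F}\}$, where $k_{\mathrm F}>0$ satisfies $k_{\mathrm F}^2=\frac12(\inf_{p\in\mathbb{Z}^2\setminus B_{\mathrm F}}|p|^2+\sup_{q\in B_{\mathrm F}}|q|^2)$; $\hbar=N^{-1/2}$; $e(p)=\hbar^2||p|^2-k_{\mathrm F}^2|$ for $p\in\mathbb{Z}^2$. *)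

theory Defs
  imports Complex_Main
begin

definition pnorm :: "int \<times> int \<Rightarrow> real" where
  "pnorm p = sqrt (real_of_int ((fst p)\<^sup>2 + (snd p)\<^sup>2))"

definition fermi_ball :: "real \<Rightarrow> (int \<times> int) set" where
  "fermi_ball kF = {k. pnorm k < kF}"

definition admissible_kF :: "real \<Rightarrow> bool" where
  "admissible_kF kF \<longleftrightarrow> kF > 0 \<and>
     kF\<^sup>2 = (Inf ((\<lambda>p. (pnorm p)\<^sup>2) ` (- fermi_ball kF))
             + Sup ((\<lambda>q. (pnorm q)\<^sup>2) ` fermi_ball kF)) / 2"

definition NF :: "real \<Rightarrow> nat" where
  "NF kF = card (fermi_ball kF)"

definition hbar :: "real \<Rightarrow> real" where
  "hbar kF = real (NF kF) powr (-1/2)"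

definition e_kin :: "real \<Rightarrow> int \<times> int \<Rightarrow> real" where
  "e_kin kF p = (hbar kF)\<^sup>2 * \<bar>(pnorm p)\<^sup>2 - kF\<^sup>2\<bar>"

end

(* Write c = k_F^2. Since hbar^2 / e(p) = 1 / | |p|^2 - c |, only the distances of the integers
   |p|^2 from c matter. Admissibility puts c halfway between the largest value of |p|^2 below c and
   the smallest one above it, so every distance is at least 1/2. Grouping the points of A by
   k = floor (2 | |p|^2 - c |), each group lies on at most two circles |p|^2 = n, and such a circle
   carries r_2(n) = O(n^delta) lattice points: up to the four units, primitive representations
   x^2 + y^2 = m correspond to square roots of -1 modulo m, of which there are O(d(m)^2), and the
   divisor bound gives d(m) = O(m^delta). Since |A| and c are O(N), the sum is O(N^delta log N). *)

theory Submission
  imports Defs "HOL-Computational_Algebra.Primes" "HOL-Analysis.Harmonic_Numbers"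
begin

lemma card_le_mult_if_fibres_le:
  assumes "finite B" "f ` A \<subseteq> B" "\<And>b. b \<in> B \<Longrightarrow> card {a \<in> A. f a = b} \<le> k"
  shows "card A \<le> k * card B"
proof -
  have "A = (\<Union>b\<in>B. {a \<in> A. f a = b})" using assms(2) by auto
  then have "card A \<le> (\<Sum>b\<in>B. card {a \<in> A. f a = b})" by (metis card_UN_le assms(1))
  also have "\<dots> \<le> (\<Sum>b\<in>B. k)" by (rule sum_mono) (use assms(3) in auto)
  finally show ?thesis by (simp add: mult.commute)
qed

section \<open>The divisor bound\<close>

definition divisor_count :: "nat \<Rightarrow> nat" where
  "divisor_count n = card {d. d dvd n}"

lemma divisor_count_mult_le: "divisor_count (a * b) \<le> divisor_count a * divisor_count b"
proof (cases "a = 0 \<or> b = 0")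
  case True
  then show ?thesis by (auto simp: divisor_count_def)
next
  case False
  have "{d. d dvd a * b} \<subseteq> (\<lambda>(x, y). x * y) ` ({x. x dvd a} \<times> {y. y dvd b})"
  proof
    fix d assume "d \<in> {d. d dvd a * b}"
    then obtain x y where "d = x * y" "x dvd a" "y dvd b" by (auto elim: dvd_productE)
    then show "d \<in> (\<lambda>(x, y). x * y) ` ({x. x dvd a} \<times> {y. y dvd b})" by force
  qed
  then have "divisor_count (a * b) \<le> card ((\<lambda>(x, y). x * y) ` ({x. x dvd a} \<times> {y. y dvd b}))"
    unfolding divisor_count_def using False by (intro card_mono) auto
  also have "\<dots> \<le> card ({x. x dvd a} \<times> {y. y dvd b})" by (rule card_image_le) (use False in auto)
  finally show ?thesis by (simp add: divisor_count_def card_cartesian_product)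
qed

lemma divisor_count_le_of_dvd:
  assumes "a dvd b" "b > 0"
  shows "divisor_count a \<le> divisor_count b"
  unfolding divisor_count_def using assms by (intro card_mono) (auto intro: dvd_trans)

lemma divisor_count_prime_power:
  assumes "prime p"
  shows "divisor_count (p ^ k) = k + 1"
proof -
  have "{d. d dvd p ^ k} = (\<lambda>i. p ^ i) ` {..k}"
    unfolding divides_primepow_nat[OF assms] by auto
  moreover have "inj_on (\<lambda>i. p ^ i) {..k}"
    using prime_gt_1_nat[OF assms] by (auto simp: inj_on_def)
  ultimately show ?thesis by (simp add: divisor_count_def card_image)
qed

lemma Suc_le_mult_powr_of_two_le:
  fixes x B \<delta> :: real
  assumes "2 \<le> x" "0 < \<delta>" "1 \<le> B" "1 \<le> B * \<delta> * ln 2"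
  shows "real (k + 1) \<le> B * x powr (k * \<delta>)"
proof -
  have "1 + k * (\<delta> * ln 2) \<le> exp (k * (\<delta> * ln 2))" by (rule exp_ge_add_one_self)
  also have "\<dots> = 2 powr (k * \<delta>)" by (simp add: powr_def mult_ac)
  also have "\<dots> \<le> x powr (k * \<delta>)" using assms by (intro powr_mono2) auto
  finally have "B * (1 + k * (\<delta> * ln 2)) \<le> B * x powr (k * \<delta>)"
    using assms(3) by (intro mult_left_mono) auto
  moreover have "real k \<le> k * (B * \<delta> * ln 2)"
    using assms(4) by (simp add: mult_le_cancel_left1)
  then have "real (k + 1) \<le> B * (1 + k * (\<delta> * ln 2))"
    using assms(3) by (simp add: algebra_simps)
  ultimately show ?thesis by linarith
qed

lemma Suc_le_powr_of_root_two_le: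
  fixes x \<delta> :: real
  assumes "2 powr (1 / \<delta>) \<le> x" "0 < \<delta>"
  shows "real (k + 1) \<le> x powr (k * \<delta>)"
proof -
  have "2 = (2 powr (1 / \<delta>)) powr \<delta>" using assms(2) by (simp add: powr_powr)
  also have "\<dots> \<le> x powr \<delta>" using assms by (intro powr_mono2) auto
  finally have "2 ^ k \<le> (x powr \<delta>) ^ k" by (intro power_mono) auto
  also have "(x powr \<delta>) ^ k = x powr (k * \<delta>)"
    using assms(1) powr_gt_zero[of 2 "1 / \<delta>"] by (simp add: powr_power mult_ac del: powr_gt_zero)
  finally have "real (2 ^ k) \<le> x powr (k * \<delta>)" by simp
  moreover have "k + 1 \<le> 2 ^ k" using less_exp[of k] by (simp add: Suc_le_eq)
  ultimately show ?thesis by (meson of_nat_le_iff order_trans)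
qed

lemma divisor_count_le_small_primes_powr:
  fixes \<delta> B :: real and n :: nat
  assumes "0 < \<delta>" "1 \<le> B" "1 \<le> B * \<delta> * ln 2"
  shows "n > 0 \<Longrightarrow> real (divisor_count n)
           \<le> B ^ card {p. prime p \<and> p dvd n \<and> p < 2 powr (1 / \<delta>)} * n powr \<delta>"
proof (induction n rule: less_induct)
  case (less n)
  define S where "S n = {p::nat. prime p \<and> p dvd n \<and> p < 2 powr (1 / \<delta>)}" for n
  show ?case
  proof (cases "n = 1")
    case True
    then show ?thesis using assms(2) by (simp add: divisor_count_def one_le_power)
  next
    case False
    then have "\<exists>p\<in>prime_factors n. True"
      using less.prems prime_factor_nat[of n] by (auto simp: in_prime_factors_iff)
    then obtain p k m where pkm: "prime p" "\<not> p dvd m" "k > 0" "n = p ^ k * m"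
      using divide_out_primepow_ex[of n "\<lambda>_. True"] less.prems by blast
    have "m > 0" using pkm(4) less.prems by (auto intro: gr0I)
    moreover have "1 < p ^ k" using pkm(1,3) prime_gt_1_nat one_less_power by blast
    ultimately have "m < n" using pkm(4) by simp
    note IH = less.IH[OF this \<open>m > 0\<close>, folded S_def]
    have S_n: "S n = (if p < 2 powr (1 / \<delta>) then insert p (S m) else S m)"
      using pkm
      by (auto simp: S_def prime_dvd_mult_iff prime_dvd_power_iff prime_gt_0_nat dest: primes_dvd_imp_eq)
    have "p \<notin> S m" "finite (S m)" using pkm(2) \<open>m > 0\<close> by (auto simp: S_def)
    then have card_S_n: "B ^ card (S n) = (if p < 2 powr (1 / \<delta>) then B else 1) * B ^ card (S m)"
      by (simp add: S_n)
    \<comment> \<open>Only the primes below \<open>2 powr (1 / \<delta>)\<close> can make \<open>k + 1\<close> exceed \<open>p powr (k * \<delta>)\<close>.\<close>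
    have prime_power_factor: "real (k + 1) \<le> (if p < 2 powr (1 / \<delta>) then B else 1) * p powr (k * \<delta>)"
      using assms prime_ge_2_nat[OF pkm(1)]
        Suc_le_mult_powr_of_two_le[of p \<delta> B k] Suc_le_powr_of_root_two_le[of \<delta> p k]
      by auto
    have "divisor_count n \<le> (k + 1) * divisor_count m"
      using divisor_count_mult_le[of "p ^ k" m] by (simp add: pkm(4) divisor_count_prime_power[OF pkm(1)])
    then have "real (divisor_count n) \<le> real (k + 1) * divisor_count m"
      by (metis of_nat_le_iff of_nat_mult)
    also have "\<dots> \<le> ((if p < 2 powr (1 / \<delta>) then B else 1) * p powr (k * \<delta>))
                     * (B ^ card (S m) * m powr \<delta>)"
      using IH prime_power_factor by (intro mult_mono) auto
    also have "\<dots> = B ^ card (S n) * n powr \<delta>"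
    proof -
      have "real n powr \<delta> = p powr (k * \<delta>) * m powr \<delta>"
        using pkm(4) prime_gt_0_nat[OF pkm(1)]
        by (simp add: powr_mult powr_powr powr_realpow[symmetric] mult_ac)
      then show ?thesis by (simp add: card_S_n mult_ac)
    qed
    finally show ?thesis unfolding S_def .
  qed
qed

lemma divisor_count_le_powr:
  fixes \<delta> :: real
  assumes "0 < \<delta>"
  shows "\<exists>C\<ge>1. \<forall>n>0. real (divisor_count n) \<le> C * n powr \<delta>"
proof -
  define B where "B = max 1 (1 / (\<delta> * ln 2))"
  define P where "P = nat \<lceil>2 powr (1 / \<delta>)\<rceil>"
  have B: "1 \<le> B" "1 \<le> B * \<delta> * ln 2"
    using assms by (auto simp: B_def max_def field_simps)
  show ?thesis
  proof (intro exI[of _ "B ^ P"] conjI allI impI)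
    show "1 \<le> B ^ P" using B by simp
    fix n :: nat assume "n > 0"
    have "card {p. prime p \<and> p dvd n \<and> p < 2 powr (1 / \<delta>)} \<le> card {..<P}"
      unfolding P_def by (intro card_mono) (auto simp: zless_nat_eq_int_zless less_ceiling_iff)
    then have "B ^ card {p. prime p \<and> p dvd n \<and> p < 2 powr (1 / \<delta>)} \<le> B ^ P"
      using B by (intro power_increasing) auto
    then show "real (divisor_count n) \<le> B ^ P * n powr \<delta>"
      using divisor_count_le_small_primes_powr[OF assms B \<open>n > 0\<close>]
      by (meson order_trans mult_right_mono powr_ge_zero)
  qed
qed

section \<open>Representations as a sum of two squares\<close>

definition sqrts_minus_one_mod :: "int \<Rightarrow> int set" where
  "sqrts_minus_one_mod m = {t. 0 \<le> t \<and> t < m \<and> m dvd t\<^sup>2 + 1}"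

lemma finite_sqrts_minus_one_mod: "finite (sqrts_minus_one_mod m)"
  unfolding sqrts_minus_one_mod_def by (rule finite_subset[of _ "{0..m}"]) auto

lemma card_pos_divisors_int:
  assumes "0 < m"
  shows "card {d :: int. 0 < d \<and> d dvd m} = divisor_count (nat m)"
proof -
  have "{d. 0 < d \<and> d dvd m} = int ` {d. d dvd nat m}"
  proof (intro equalityI subsetI)
    fix d assume "d \<in> {d. 0 < d \<and> d dvd m}"
    then show "d \<in> int ` {d. d dvd nat m}"
      using assms by (auto simp: nat_dvd_iff intro: image_eqI[of _ _ "nat d"])
  next
    fix d assume "d \<in> int ` {d. d dvd nat m}"
    then obtain x where x: "d = int x" "x dvd nat m" by blast
    then have "int x dvd int (nat m)" by (simp only: int_dvd_int_iff)
    moreover have "x \<noteq> 0"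
    proof
      assume "x = 0"
      with x(2) have "nat m = 0" by simp
      with assms show False by simp
    qed
    ultimately show "d \<in> {d. 0 < d \<and> d dvd m}" using assms x(1) by simp
  qed
  then show ?thesis by (simp add: divisor_count_def card_image)
qed

lemma dvd_double_diff_if_same_gcds:
  fixes m t t' s :: int
  assumes "0 < m" "m dvd s\<^sup>2 + 1" "m dvd t\<^sup>2 + 1" "m dvd t'\<^sup>2 + 1"
    and "gcd (t - s) m = gcd (t' - s) m" "gcd (t + s) m = gcd (t' + s) m"
  shows "m dvd 2 * (t - t')"
proof -
  \<comment> \<open>\<open>m\<close> divides \<open>d1 * d2\<close>, \<open>gcd d1 d2\<close> divides 2 because \<open>s\<close> is a unit modulo \<open>m\<close>,
    and \<open>lcm d1 d2\<close> divides \<open>t - t'\<close>.\<close>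
  define d1 where "d1 = gcd (t - s) m"
  define d2 where "d2 = gcd (t + s) m"
  have "(t - s) * (t + s) = (t\<^sup>2 + 1) - (s\<^sup>2 + 1)" by (simp add: power2_eq_square algebra_simps)
  then have "m dvd (t - s) * (t + s)" using assms(2,3) by (metis dvd_diff)
  then have "m dvd d1 * d2"
    unfolding d1_def d2_def by (metis division_decomp dvd_triv_right gcd_greatest mult.commute mult_dvd_mono)
  have "gcd d1 d2 dvd m" unfolding d1_def by (meson gcd_dvd1 gcd_dvd2 dvd_trans)
  moreover have "coprime s m"
    using assms(2) by (metis coprime_add_one_right coprime_divisors dvdI power2_eq_square)
  ultimately have "coprime (gcd d1 d2) s" by (meson coprime_commute coprime_divisors dvd_refl)
  moreover have "gcd d1 d2 dvd (t + s) - (t - s)"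
    unfolding d1_def d2_def by (meson dvd_diff gcd_dvd1 gcd_dvd2 dvd_trans)
  then have "gcd d1 d2 dvd 2 * s" by simp
  ultimately have "gcd d1 d2 dvd 2" by (simp add: coprime_dvd_mult_left_iff)
  have "d1 dvd (t - s) - (t' - s)" "d2 dvd (t + s) - (t' + s)"
    unfolding d1_def d2_def using assms(5,6) by (metis dvd_diff gcd_dvd1)+
  then have "lcm d1 d2 dvd t - t'" by (simp add: lcm_least)
  with \<open>gcd d1 d2 dvd 2\<close> have "gcd d1 d2 * lcm d1 d2 dvd 2 * (t - t')" by (rule mult_dvd_mono)
  moreover have "gcd d1 d2 * lcm d1 d2 = d1 * d2"
    using assms(1) by (simp add: d1_def d2_def abs_mult)
  ultimately show ?thesis using \<open>m dvd d1 * d2\<close> by (metis dvd_trans)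
qed

lemma dvd_double_abs_less_cases:
  fixes m u :: int
  assumes "m dvd 2 * u" "\<bar>u\<bar> < m"
  shows "u \<in> {0, m div 2, - (m div 2)}"
proof -
  obtain j where j: "2 * u = m * j" using assms(1) by blast
  then have "\<bar>m * j\<bar> < 2 * m" using assms(2) by linarith
  moreover have "0 < m" using assms(2) by linarith
  ultimately have "\<bar>j\<bar> < 2" by (simp add: abs_mult mult.commute[of 2])
  then have "j \<in> {-1, 0, 1}" by auto
  then show ?thesis using j by auto
qed

lemma card_sqrts_minus_one_mod_le:
  assumes "0 < m"
  shows "card (sqrts_minus_one_mod m) \<le> 3 * divisor_count (nat m) ^ 2"
proof (cases "sqrts_minus_one_mod m = {}")
  case False
  then obtain s where s: "s \<in> sqrts_minus_one_mod m" by blast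
  define D where "D = {d :: int. 0 < d \<and> d dvd m}"
  define f where "f t = (gcd (t - s) m, gcd (t + s) m)" for t
  have "card (sqrts_minus_one_mod m) \<le> 3 * card (D \<times> D)"
  proof (rule card_le_mult_if_fibres_le)
    show "finite (D \<times> D)" using assms by (simp add: D_def)
    show "f ` sqrts_minus_one_mod m \<subseteq> D \<times> D" using assms by (auto simp: f_def D_def)
    fix b
    show "card {t \<in> sqrts_minus_one_mod m. f t = b} \<le> 3"
    proof (cases "{t \<in> sqrts_minus_one_mod m. f t = b} = {}")
      case False
      then obtain t' where t': "t' \<in> sqrts_minus_one_mod m" "f t' = b" by blast
      have "{t \<in> sqrts_minus_one_mod m. f t = b} \<subseteq> (\<lambda>u. t' + u) ` {0, m div 2, - (m div 2)}"
      proof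
        fix t assume t: "t \<in> {t \<in> sqrts_minus_one_mod m. f t = b}"
        have "m dvd 2 * (t - t')"
          using assms s t t' by (intro dvd_double_diff_if_same_gcds[of m s])
            (auto simp: sqrts_minus_one_mod_def f_def)
        moreover have "\<bar>t - t'\<bar> < m" using t t' by (auto simp: sqrts_minus_one_mod_def)
        ultimately have "t - t' \<in> {0, m div 2, - (m div 2)}" by (rule dvd_double_abs_less_cases)
        then show "t \<in> (\<lambda>u. t' + u) ` {0, m div 2, - (m div 2)}" by force
      qed
      then have "card {t \<in> sqrts_minus_one_mod m. f t = b}
                   \<le> card ((\<lambda>u. t' + u) ` {0, m div 2, - (m div 2)})"
        by (intro card_mono) auto
      also have "\<dots> \<le> 3" by (rule order_trans[OF card_image_le]) (auto simp: card_insert_if)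
      finally show ?thesis .
    qed (metis card.empty zero_le)
  qed
  then show ?thesis
    using card_pos_divisors_int[OF assms] by (simp add: D_def card_cartesian_product power2_eq_square)
qed (metis card.empty zero_le)

definition two_squares_reps :: "int \<Rightarrow> (int \<times> int) set" where
  "two_squares_reps n = {(x, y). x\<^sup>2 + y\<^sup>2 = n}"

definition primitive_two_squares_reps :: "int \<Rightarrow> (int \<times> int) set" where
  "primitive_two_squares_reps n = {(x, y). x\<^sup>2 + y\<^sup>2 = n \<and> coprime x y}"

lemma abs_le_power2_int: "\<bar>x\<bar> \<le> x\<^sup>2" for x :: int
proof (cases "x = 0")
  case False
  then have "\<bar>x\<bar> * 1 \<le> \<bar>x\<bar> * \<bar>x\<bar>" by (intro mult_left_mono) auto
  then show ?thesis by (simp add: power2_eq_square abs_mult[symmetric])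
qed simp

lemma finite_two_squares_reps: "finite (two_squares_reps n)"
proof (rule finite_subset)
  show "two_squares_reps n \<subseteq> {-\<bar>n\<bar>..\<bar>n\<bar>} \<times> {-\<bar>n\<bar>..\<bar>n\<bar>}"
  proof safe
    fix x y assume "(x, y) \<in> two_squares_reps n"
    then have "x\<^sup>2 + y\<^sup>2 = n" by (simp add: two_squares_reps_def)
    moreover have "\<bar>x\<bar> \<le> x\<^sup>2" "\<bar>y\<bar> \<le> y\<^sup>2" "0 \<le> x\<^sup>2" "0 \<le> y\<^sup>2" by (simp_all add: abs_le_power2_int)
    ultimately show "x \<in> {-\<bar>n\<bar>..\<bar>n\<bar>}" "y \<in> {-\<bar>n\<bar>..\<bar>n\<bar>}" by auto
  qed
qed simp

lemma card_two_squares_reps_nonpos: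
  assumes "n \<le> 0"
  shows "card (two_squares_reps n) \<le> 1"
proof -
  have "two_squares_reps n \<subseteq> {(0, 0)}"
    using assms by (auto simp: two_squares_reps_def sum_power2_le_zero_iff)
  from card_mono[OF _ this] show ?thesis by simp
qed

lemma sqrt_minus_one_mod_of_primitive_rep:
  fixes x y m :: int
  assumes "0 < m" "x\<^sup>2 + y\<^sup>2 = m" "coprime x y"
  shows "\<exists>t \<in> sqrts_minus_one_mod m. m dvd x - t * y"
proof -
  have "gcd y (y * y + x\<^sup>2) = gcd y (x\<^sup>2)" by (rule gcd_add_mult)
  moreover have "coprime y (x\<^sup>2)" using assms(3) by (simp add: coprime_commute)
  ultimately have "gcd y m = 1"
    using assms(2) by (simp add: coprime_iff_gcd_eq_1 power2_eq_square add.commute)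
  then obtain w v where "w * y + v * m = 1"
    using bezout_coefficients_fst_snd[of y m] by metis
  then have "y * w = 1 + m * (- v)" by (simp add: algebra_simps)
  then obtain r where w: "y * w = 1 + m * r" by blast
  define t where "t = (x * w) mod m"
  define q where "q = (x * w) div m"
  have t: "t = x * w - m * q"
    unfolding t_def q_def by (simp add: minus_div_mult_eq_mod[symmetric] mult.commute)
  have "t\<^sup>2 + 1 = m * (w\<^sup>2 - 2 * r - m * r\<^sup>2 - 2 * x * w * q + m * q\<^sup>2)"
    using t w assms(2)[symmetric] by algebra
  moreover have "x - t * y = m * (q * y - x * r)" using t w by algebra
  moreover have "0 \<le> t" "t < m" using assms(1) unfolding t_def by auto
  ultimately show ?thesis unfolding sqrts_minus_one_mod_def by (intro bexI[of _ t]) auto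
qed

lemma sum_squares_eq_1_cases:
  fixes a c :: int
  assumes "a\<^sup>2 + c\<^sup>2 = 1"
  shows "(a, c) \<in> {(1, 0), (-1, 0), (0, 1), (0, -1)}"
proof -
  have "\<bar>a\<bar> \<le> a\<^sup>2" "\<bar>c\<bar> \<le> c\<^sup>2" "0 \<le> a\<^sup>2" "0 \<le> c\<^sup>2" by (simp_all add: abs_le_power2_int)
  then have "a \<in> {-1, 0, 1}" "c \<in> {-1, 0, 1}" using assms by auto
  then show ?thesis using assms by auto
qed

lemma two_squares_reps_same_root_associated:
  fixes m t x y x' y' :: int
  assumes "0 < m" "x\<^sup>2 + y\<^sup>2 = m" "x'\<^sup>2 + y'\<^sup>2 = m" "m dvd t\<^sup>2 + 1"
    and "m dvd x - t * y" "m dvd x' - t * y'"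
  shows "(x', y') \<in> {(x, y), (-x, -y), (-y, x), (y, -x)}"
proof -
  obtain k where k: "x = t * y + m * k" using assms(5) by (metis dvd_def diff_eq_eq add.commute)
  obtain k' where k': "x' = t * y' + m * k'" using assms(6) by (metis dvd_def diff_eq_eq add.commute)
  obtain s where s: "t\<^sup>2 + 1 = m * s" using assms(4) by blast
  \<comment> \<open>In the Gaussian integers, \<open>(x - iy)(x' + iy')\<close> is \<open>m\<close> times a unit \<open>a + ic\<close>.\<close>
  have "x * x' + y * y' = m * (s * y * y' + k * t * y' + t * y * k' + m * k * k')"
    using k k' s by algebra
  then obtain a where a: "x * x' + y * y' = m * a" by blast
  have "x * y' - x' * y = m * (k * y' - k' * y)" using k k' by algebra
  then obtain c where c: "x * y' - x' * y = m * c" by blast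
  have "(x * x' + y * y')\<^sup>2 + (x * y' - x' * y)\<^sup>2 = (x\<^sup>2 + y\<^sup>2) * (x'\<^sup>2 + y'\<^sup>2)" by algebra
  then have "m\<^sup>2 * (a\<^sup>2 + c\<^sup>2) = m\<^sup>2 * 1" using a c assms(2,3) by algebra
  then have "(a, c) \<in> {(1, 0), (-1, 0), (0, 1), (0, -1)}"
    using assms(1) by (intro sum_squares_eq_1_cases) simp
  moreover have "m * x' = m * (x * a - y * c)" "m * y' = m * (y * a + x * c)"
    using a c assms(2) by algebra+
  then have "x' = x * a - y * c" "y' = y * a + x * c" using assms(1) by simp_all
  ultimately show ?thesis by auto
qed

lemma card_primitive_two_squares_reps_le:
  assumes "0 < m"
  shows "card (primitive_two_squares_reps m) \<le> 4 * card (sqrts_minus_one_mod m)"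
proof (rule card_le_mult_if_fibres_le)
  define root where "root p = (SOME t. t \<in> sqrts_minus_one_mod m \<and> m dvd fst p - t * snd p)" for p
  have root: "root p \<in> sqrts_minus_one_mod m \<and> m dvd fst p - root p * snd p"
    if p: "p \<in> primitive_two_squares_reps m" for p
  proof -
    obtain x y where "p = (x, y)" "x\<^sup>2 + y\<^sup>2 = m" "coprime x y"
      using p by (auto simp: primitive_two_squares_reps_def)
    then have "\<exists>t. t \<in> sqrts_minus_one_mod m \<and> m dvd fst p - t * snd p"
      using sqrt_minus_one_mod_of_primitive_rep[OF assms] by auto
    then show ?thesis unfolding root_def by (rule someI_ex)
  qed
  show "finite (sqrts_minus_one_mod m)" by (rule finite_sqrts_minus_one_mod)
  show "root ` primitive_two_squares_reps m \<subseteq> sqrts_minus_one_mod m" using root by blast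
  fix t
  show "card {p \<in> primitive_two_squares_reps m. root p = t} \<le> 4"
  proof (cases "{p \<in> primitive_two_squares_reps m. root p = t} = {}")
    case False
    then obtain x y where xy: "(x, y) \<in> primitive_two_squares_reps m" "root (x, y) = t" by auto
    have "{p \<in> primitive_two_squares_reps m. root p = t} \<subseteq> {(x, y), (-x, -y), (-y, x), (y, -x)}"
    proof
      fix p assume p: "p \<in> {p \<in> primitive_two_squares_reps m. root p = t}"
      obtain x' y' where p_eq: "p = (x', y')" by fastforce
      have "x\<^sup>2 + y\<^sup>2 = m" "x'\<^sup>2 + y'\<^sup>2 = m"
        using xy(1) p by (auto simp: p_eq primitive_two_squares_reps_def)
      moreover have "m dvd t\<^sup>2 + 1" "m dvd x - t * y"
        using root[OF xy(1)] by (auto simp: xy(2) sqrts_minus_one_mod_def)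
      moreover have "m dvd x' - t * y'" using root[of p] p by (simp add: p_eq)
      ultimately show "p \<in> {(x, y), (-x, -y), (-y, x), (y, -x)}"
        unfolding p_eq by (rule two_squares_reps_same_root_associated[OF assms])
    qed
    then have "card {p \<in> primitive_two_squares_reps m. root p = t}
                 \<le> card {(x, y), (-x, -y), (-y, x), (y, -x)}"
      by (intro card_mono) auto
    also have "\<dots> \<le> 4" using card_length[of "[(x, y), (-x, -y), (-y, x), (y, -x)]"] by simp
    finally show ?thesis .
  qed (metis card.empty zero_le)
qed

lemma two_squares_rep_div_gcd:
  fixes x y :: int
  assumes "0 < n" "x\<^sup>2 + y\<^sup>2 = n"
  defines "g \<equiv> gcd x y"
  shows "0 < g" "g\<^sup>2 dvd n" "(x div g, y div g) \<in> primitive_two_squares_reps (n div g\<^sup>2)"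
proof -
  have "x \<noteq> 0 \<or> y \<noteq> 0" using assms(1,2) by auto
  then have "0 < g" "coprime (x div g) (y div g)" unfolding g_def using div_gcd_coprime by auto
  then show "0 < g" by simp
  have "x = g * (x div g)" "y = g * (y div g)" unfolding g_def by simp_all
  then have "n = g\<^sup>2 * ((x div g)\<^sup>2 + (y div g)\<^sup>2)"
    using assms(2) by (metis power_mult_distrib distrib_left)
  then show "g\<^sup>2 dvd n" by (metis dvd_triv_left)
  from \<open>n = _\<close> have "(x div g)\<^sup>2 + (y div g)\<^sup>2 = n div g\<^sup>2" using \<open>0 < g\<close> by simp
  with \<open>coprime (x div g) (y div g)\<close>
  show "(x div g, y div g) \<in> primitive_two_squares_reps (n div g\<^sup>2)"
    by (simp add: primitive_two_squares_reps_def)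
qed

lemma card_two_squares_reps_le_sum_primitive:
  assumes "0 < n"
  shows "card (two_squares_reps n)
           \<le> (\<Sum>g \<in> {g. 0 < g \<and> g\<^sup>2 dvd n}. card (primitive_two_squares_reps (n div g\<^sup>2)))"
proof -
  define G where "G = {g :: int. 0 < g \<and> g\<^sup>2 dvd n}"
  define P where "P g = primitive_two_squares_reps (n div g\<^sup>2)" for g
  define divide_gcd where
    "divide_gcd p = (gcd (fst p) (snd p), (fst p div gcd (fst p) (snd p), snd p div gcd (fst p) (snd p)))"
    for p :: "int \<times> int"
  have "G \<subseteq> {d. 0 < d \<and> d dvd n}" by (auto simp: G_def power2_eq_square dvd_mult_left)
  then have "finite G" using assms by (auto intro: finite_subset)
  have "P g \<subseteq> two_squares_reps (n div g\<^sup>2)" for g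
    by (auto simp: P_def primitive_two_squares_reps_def two_squares_reps_def)
  then have "finite (P g)" for g using finite_two_squares_reps by (rule finite_subset)
  have "card (two_squares_reps n) \<le> card (Sigma G P)"
  proof (rule card_inj_on_le)
    show "inj_on divide_gcd (two_squares_reps n)"
    proof (rule inj_onI)
      have recover:
        "p = (fst (divide_gcd p) * fst (snd (divide_gcd p)), fst (divide_gcd p) * snd (snd (divide_gcd p)))"
        for p by (simp add: divide_gcd_def)
      fix p q assume "divide_gcd p = divide_gcd q"
      then show "p = q" using recover[of p] recover[of q] by simp
    qed
    show "divide_gcd ` two_squares_reps n \<subseteq> Sigma G P"
    proof
      fix s assume "s \<in> divide_gcd ` two_squares_reps n"
      then obtain x y where "x\<^sup>2 + y\<^sup>2 = n" "s = divide_gcd (x, y)" by (auto simp: two_squares_reps_def)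
      then show "s \<in> Sigma G P"
        using two_squares_rep_div_gcd[OF assms \<open>x\<^sup>2 + y\<^sup>2 = n\<close>]
        by (simp add: divide_gcd_def G_def P_def)
    qed
    show "finite (Sigma G P)" using \<open>finite G\<close> \<open>\<And>g. finite (P g)\<close> by auto
  qed
  also have "\<dots> = (\<Sum>g\<in>G. card (P g))" using \<open>finite G\<close> \<open>\<And>g. finite (P g)\<close> by simp
  finally show ?thesis by (simp add: G_def P_def)
qed

lemma card_two_squares_reps_le:
  assumes "0 < n"
  shows "card (two_squares_reps n) \<le> 12 * divisor_count (nat n) ^ 3"
proof -
  define G where "G = {g :: int. 0 < g \<and> g\<^sup>2 dvd n}"
  have "(\<Sum>g\<in>G. card (primitive_two_squares_reps (n div g\<^sup>2)))
          \<le> (\<Sum>g\<in>G. 12 * divisor_count (nat n) ^ 2)"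
  proof (rule sum_mono)
    fix g assume "g \<in> G"
    then have "0 < n div g\<^sup>2" "n div g\<^sup>2 dvd n"
      using assms by (auto simp: G_def zero_less_mult_iff)
    then have "divisor_count (nat (n div g\<^sup>2)) \<le> divisor_count (nat n)"
      using assms by (intro divisor_count_le_of_dvd) (auto simp: nat_dvd_iff)
    then have "divisor_count (nat (n div g\<^sup>2)) ^ 2 \<le> divisor_count (nat n) ^ 2"
      by (rule power_mono) simp
    then show "card (primitive_two_squares_reps (n div g\<^sup>2)) \<le> 12 * divisor_count (nat n) ^ 2"
      using card_primitive_two_squares_reps_le[OF \<open>0 < n div g\<^sup>2\<close>]
        card_sqrts_minus_one_mod_le[OF \<open>0 < n div g\<^sup>2\<close>] by linarith
  qed
  also have "\<dots> \<le> divisor_count (nat n) * (12 * divisor_count (nat n) ^ 2)"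
  proof -
    have "G \<subseteq> {d. 0 < d \<and> d dvd n}" by (auto simp: G_def power2_eq_square dvd_mult_left)
    then have "card G \<le> divisor_count (nat n)"
      using card_mono[of "{d. 0 < d \<and> d dvd n}" G] card_pos_divisors_int[OF assms] assms by simp
    then show ?thesis by simp
  qed
  finally show ?thesis
    using card_two_squares_reps_le_sum_primitive[OF assms]
    by (simp add: G_def power2_eq_square power3_eq_cube)
qed

lemma card_two_squares_reps_le_powr:
  fixes \<delta> :: real
  assumes "0 < \<delta>"
  shows "\<exists>C\<ge>1. \<forall>n Y. real_of_int n \<le> Y \<longrightarrow> 1 \<le> Y \<longrightarrow>
           card (two_squares_reps n) \<le> C * Y powr \<delta>"
proof -
  obtain C where C: "1 \<le> C" "\<And>n. n > 0 \<Longrightarrow> real (divisor_count n) \<le> C * n powr (\<delta> / 3)"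
    using divisor_count_le_powr[of "\<delta> / 3"] assms by auto
  have "card (two_squares_reps n) \<le> 12 * C ^ 3 * Y powr \<delta>" if "real_of_int n \<le> Y" "1 \<le> Y" for n Y
  proof (cases "0 < n")
    case True
    have "real (divisor_count (nat n)) \<le> C * n powr (\<delta> / 3)" using C(2)[of "nat n"] True by simp
    then have "real (divisor_count (nat n)) ^ 3 \<le> (C * n powr (\<delta> / 3)) ^ 3"
      by (rule power_mono) simp
    also have "\<dots> = C ^ 3 * n powr \<delta>" using True by (simp add: power_mult_distrib powr_power)
    also have "\<dots> \<le> C ^ 3 * Y powr \<delta>"
      using that True assms C(1) by (intro mult_left_mono powr_mono2) auto
    finally have "real (divisor_count (nat n)) ^ 3 \<le> C ^ 3 * Y powr \<delta>" .
    moreover have "real (card (two_squares_reps n)) \<le> 12 * real (divisor_count (nat n)) ^ 3"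
      using card_two_squares_reps_le[OF True]
      by (metis of_nat_le_iff of_nat_mult of_nat_numeral of_nat_power)
    ultimately show ?thesis by linarith
  next
    case False
    have "1 \<le> C ^ 3 * Y powr \<delta>"
      using C(1) that(2) assms by (intro mult_ge1_I one_le_power ge_one_powr_ge_zero) auto
    then show ?thesis using card_two_squares_reps_nonpos[of n] False by linarith
  qed
  moreover have "1 \<le> 12 * C ^ 3" using C(1) one_le_power[of C 3] by linarith
  ultimately show ?thesis by blast
qed

section \<open>Sums of inverse distances to a level\<close>

lemma harm_le_one_plus_powr:
  assumes "0 < \<delta>"
  shows "(harm n :: real) \<le> 1 + n powr \<delta> / \<delta>"
proof (cases "n = 0")
  case False
  have "harm n - ln n \<le> (1 :: real)"
    using euler_mascheroni_sequence_decreasing[of 1 n] False by (simp add: harm_def)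
  moreover have "ln n \<le> n powr \<delta> / \<delta>" using False assms by (intro ln_powr_bound) auto
  ultimately show ?thesis by simp
qed (simp add: harm_def)

lemma eq_ceiling_or_floor_if_floor_double_dist:
  fixes n :: int and c :: real
  assumes "real k \<le> 2 * \<bar>n - c\<bar>" "2 * \<bar>n - c\<bar> < real k + 1"
  shows "n = \<lceil>c + k / 2\<rceil> \<or> n = \<lfloor>c - k / 2\<rfloor>"
proof (cases "c \<le> n")
  case True
  then have "\<lceil>c + k / 2\<rceil> = n" using assms by (intro ceiling_unique) auto
  then show ?thesis by simp
next
  case False
  then have "\<lfloor>c - k / 2\<rfloor> = n" using assms by (intro floor_unique) auto
  then show ?thesis by simp
qed

lemma card_shell_le:
  fixes f :: "'a \<Rightarrow> int" and c R :: real
  assumes "finite A" and level: "\<And>n. n \<le> c + k / 2 + 1 \<Longrightarrow> card {p \<in> A. f p = n} \<le> R"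
  shows "card {p \<in> A. nat \<lfloor>2 * \<bar>f p - c\<bar>\<rfloor> = k} \<le> 2 * R"
proof -
  define n1 where "n1 = \<lceil>c + k / 2\<rceil>"
  define n2 where "n2 = \<lfloor>c - k / 2\<rfloor>"
  have "{p \<in> A. nat \<lfloor>2 * \<bar>f p - c\<bar>\<rfloor> = k} \<subseteq> {p \<in> A. f p = n1} \<union> {p \<in> A. f p = n2}"
  proof
    fix p assume p: "p \<in> {p \<in> A. nat \<lfloor>2 * \<bar>f p - c\<bar>\<rfloor> = k}"
    then have "\<lfloor>2 * \<bar>f p - c\<bar>\<rfloor> = int k" by auto
    then have "real k \<le> 2 * \<bar>f p - c\<bar>" "2 * \<bar>f p - c\<bar> < real k + 1"
      by (simp_all add: floor_eq_iff)
    then show "p \<in> {p \<in> A. f p = n1} \<union> {p \<in> A. f p = n2}"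
      using p eq_ceiling_or_floor_if_floor_double_dist unfolding n1_def n2_def by blast
  qed
  then have "card {p \<in> A. nat \<lfloor>2 * \<bar>f p - c\<bar>\<rfloor> = k}
               \<le> card ({p \<in> A. f p = n1} \<union> {p \<in> A. f p = n2})"
    using assms(1) by (intro card_mono) auto
  also have "\<dots> \<le> card {p \<in> A. f p = n1} + card {p \<in> A. f p = n2}" by (rule card_Un_le)
  finally have "real (card {p \<in> A. nat \<lfloor>2 * \<bar>f p - c\<bar>\<rfloor> = k})
                 \<le> real (card {p \<in> A. f p = n1}) + real (card {p \<in> A. f p = n2})"
    by (simp only: of_nat_add[symmetric] of_nat_le_iff)
  moreover have "n1 \<le> c + k / 2 + 1" "n2 \<le> c + k / 2 + 1"
    using of_int_ceiling_le_add_one[of "c + k / 2"] of_int_floor_le[of "c - k / 2"]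
    unfolding n1_def n2_def by linarith+
  ultimately show ?thesis using level[of n1] level[of n2] by linarith
qed

lemma sum_inverse_dist_le_harm:
  fixes f :: "'a \<Rightarrow> int" and c R :: real
  assumes "finite A" and gap: "\<And>p. p \<in> A \<Longrightarrow> 1 / 2 \<le> \<bar>f p - c\<bar>"
    and level: "\<And>n. n \<le> c + card A + 1 \<Longrightarrow> card {p \<in> A. f p = n} \<le> R"
  shows "(\<Sum>p\<in>A. 1 / \<bar>f p - c\<bar>) \<le> 2 + 4 * R * harm (card A)"
proof -
  define J where "J = card A"
  define j where "j p = nat \<lfloor>2 * \<bar>f p - c\<bar>\<rfloor>" for p
  have j: "1 \<le> j p" "j p \<le> 2 * \<bar>f p - c\<bar>" if "p \<in> A" for p
  proof -
    have "1 \<le> \<lfloor>2 * \<bar>f p - c\<bar>\<rfloor>" using gap[OF that] by (simp add: le_floor_iff)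
    then have "real (j p) = \<lfloor>2 * \<bar>f p - c\<bar>\<rfloor>" "1 \<le> j p" by (simp_all add: j_def le_nat_iff)
    then show "1 \<le> j p" "j p \<le> 2 * \<bar>f p - c\<bar>" by linarith+
  qed
  have inverse_le: "1 / \<bar>f p - c\<bar> \<le> 2 / j p" if "p \<in> A" for p
  proof -
    have "1 / \<bar>f p - c\<bar> = 2 / (2 * \<bar>f p - c\<bar>)" by simp
    also have "\<dots> \<le> 2 / j p" using j[OF that] by (intro divide_left_mono mult_pos_pos) auto
    finally show ?thesis .
  qed
  define A1 where "A1 = {p \<in> A. j p \<le> J}"
  define A2 where "A2 = {p \<in> A. J < j p}"
  have split:
    "(\<Sum>p\<in>A. 1 / \<bar>f p - c\<bar>) = (\<Sum>p\<in>A1. 1 / \<bar>f p - c\<bar>) + (\<Sum>p\<in>A2. 1 / \<bar>f p - c\<bar>)"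
    unfolding A1_def A2_def using assms(1)
    by (subst sum.union_disjoint[symmetric]) (auto intro: sum.cong)
  have "(\<Sum>p\<in>A2. 1 / \<bar>f p - c\<bar>) \<le> (\<Sum>p\<in>A2. 2 / (J + 1))"
    using inverse_le by (intro sum_mono order_trans[OF inverse_le] divide_left_mono) (auto simp: A2_def)
  also have "\<dots> \<le> 2"
    using card_mono[OF assms(1), of A2] by (auto simp: A2_def J_def field_simps)
  finally have tail: "(\<Sum>p\<in>A2. 1 / \<bar>f p - c\<bar>) \<le> 2" .
  have "(\<Sum>p\<in>A1. 1 / \<bar>f p - c\<bar>) \<le> (\<Sum>p\<in>A1. 2 / j p)"
    using inverse_le by (intro sum_mono) (auto simp: A1_def)
  also have "\<dots> = (\<Sum>k\<in>{1..J}. \<Sum>p\<in>{p \<in> A1. j p = k}. 2 / j p)"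
    using assms(1) j(1) by (intro sum.group[symmetric]) (auto simp: A1_def)
  also have "\<dots> = (\<Sum>k\<in>{1..J}. card {p \<in> A1. j p = k} * (2 / k))" by simp
  also have "\<dots> \<le> (\<Sum>k\<in>{1..J}. 2 * R * (2 / k))"
  proof (intro sum_mono mult_right_mono)
    fix k assume "k \<in> {1..J}"
    then have "card {p \<in> A. j p = k} \<le> 2 * R"
      unfolding j_def using assms(1) by (intro card_shell_le level) (auto simp: J_def)
    moreover have "card {p \<in> A1. j p = k} \<le> card {p \<in> A. j p = k}"
      using assms(1) by (intro card_mono) (auto simp: A1_def)
    ultimately show "card {p \<in> A1. j p = k} \<le> 2 * R" by linarith
  qed simp
  also have "\<dots> = 4 * R * harm J" by (simp add: harm_def sum_distrib_left divide_inverse mult.assoc)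
  finally have head: "(\<Sum>p\<in>A1. 1 / \<bar>f p - c\<bar>) \<le> 4 * R * harm J" .
  show ?thesis using split tail head unfolding J_def by linarith
qed

section \<open>The Fermi ball\<close>

lemma pnorm_sq: "(pnorm p)\<^sup>2 = of_int ((fst p)\<^sup>2 + (snd p)\<^sup>2)"
  unfolding pnorm_def by simp

lemma pnorm_le_imp_mem_box:
  assumes "pnorm p \<le> r"
  shows "p \<in> {-\<lceil>r\<rceil>..\<lceil>r\<rceil>} \<times> {-\<lceil>r\<rceil>..\<lceil>r\<rceil>}"
proof -
  have "\<bar>of_int (fst p)\<bar> \<le> pnorm p" "\<bar>of_int (snd p)\<bar> \<le> pnorm p"
    unfolding pnorm_def by (auto intro: real_le_rsqrt)
  then have "\<bar>fst p\<bar> \<le> \<lceil>r\<rceil>" "\<bar>snd p\<bar> \<le> \<lceil>r\<rceil>" using assms by linarith+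
  then show ?thesis by (cases p) auto
qed

lemma finite_lattice_disc: "finite {p. pnorm p \<le> r}"
proof (rule finite_subset)
  show "{p. pnorm p \<le> r} \<subseteq> {-\<lceil>r\<rceil>..\<lceil>r\<rceil>} \<times> {-\<lceil>r\<rceil>..\<lceil>r\<rceil>}"
    using pnorm_le_imp_mem_box by blast
qed simp

lemma card_lattice_disc_le:
  assumes "0 \<le> r"
  shows "real (card {p. pnorm p \<le> r}) \<le> (2 * r + 3)\<^sup>2"
proof -
  have "card {p. pnorm p \<le> r} \<le> card ({-\<lceil>r\<rceil>..\<lceil>r\<rceil>} \<times> {-\<lceil>r\<rceil>..\<lceil>r\<rceil>})"
    using pnorm_le_imp_mem_box by (intro card_mono) blast+
  then have "real (card {p. pnorm p \<le> r}) \<le> real (card ({-\<lceil>r\<rceil>..\<lceil>r\<rceil>} \<times> {-\<lceil>r\<rceil>..\<lceil>r\<rceil>}))"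
    by (rule of_nat_mono)
  also have "\<dots> = (2 * of_int \<lceil>r\<rceil> + 1)\<^sup>2"
    using assms by (simp add: card_cartesian_product power2_eq_square)
  also have "\<dots> \<le> (2 * r + 3)\<^sup>2"
    using assms by (intro power_mono) linarith+
  finally show ?thesis .
qed

lemma finite_fermi_ball: "finite (fermi_ball kF)"
  by (rule finite_subset[OF _ finite_lattice_disc[of kF]]) (auto simp: fermi_ball_def)

lemma zero_mem_fermi_ball: "0 < kF \<Longrightarrow> (0, 0) \<in> fermi_ball kF"
  by (simp add: fermi_ball_def pnorm_def)

lemma one_le_NF: "0 < kF \<Longrightarrow> 1 \<le> NF kF"
  using zero_mem_fermi_ball finite_fermi_ball by (auto simp: NF_def Suc_le_eq card_gt_0_iff)

lemma kF_sq_le_NF: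
  assumes "0 < kF"
  shows "kF\<^sup>2 \<le> 4 * NF kF"
proof -
  define c where "c = \<lceil>kF / 2\<rceil>"
  have "1 \<le> c" "of_int c - 1 < kF / 2" "kF / 2 \<le> of_int c"
    using assms ceiling_correct[of "kF / 2"] unfolding c_def
    by (auto simp: le_ceiling_iff simp del: ceiling_divide_eq_div)
  moreover define m where "m = c - 1"
  ultimately have m: "0 \<le> m" "of_int m < kF / 2" "kF / 2 \<le> 2 * of_int m + 1" by linarith+
  have "{-m..m} \<times> {-m..m} \<subseteq> fermi_ball kF"
  proof safe
    fix x y :: int assume "x \<in> {-m..m}" "y \<in> {-m..m}"
    then have "x\<^sup>2 \<le> m\<^sup>2" "y\<^sup>2 \<le> m\<^sup>2" using m(1) by (auto simp: abs_le_square_iff[symmetric])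
    then have "x\<^sup>2 + y\<^sup>2 \<le> 2 * m\<^sup>2" by linarith
    then have "of_int (x\<^sup>2 + y\<^sup>2) \<le> (of_int (2 * m\<^sup>2) :: real)" by (simp only: of_int_le_iff)
    then have "of_int (x\<^sup>2 + y\<^sup>2) \<le> 2 * (of_int m :: real)\<^sup>2" by simp
    also have "\<dots> < 2 * (kF / 2)\<^sup>2" using m by (intro mult_strict_left_mono power_strict_mono) auto
    also have "\<dots> \<le> kF\<^sup>2" by (simp add: power_divide)
    finally have "(pnorm (x, y))\<^sup>2 < kF\<^sup>2" by (simp add: pnorm_sq)
    then show "(x, y) \<in> fermi_ball kF"
      using assms by (simp add: fermi_ball_def power_less_imp_less_base)
  qed
  then have "card ({-m..m} \<times> {-m..m}) \<le> NF kF"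
    unfolding NF_def using finite_fermi_ball by (rule card_mono[rotated])
  then have "real (card ({-m..m} \<times> {-m..m})) \<le> real (NF kF)" by (rule of_nat_mono)
  moreover have "real (card ({-m..m} \<times> {-m..m})) = (2 * of_int m + 1)\<^sup>2"
    using m(1) by (simp add: card_cartesian_product power2_eq_square)
  moreover have "(kF / 2)\<^sup>2 \<le> (2 * of_int m + 1)\<^sup>2" using m assms by (intro power_mono) auto
  ultimately show ?thesis by (simp add: power_divide)
qed

lemma card_lattice_disc_double_kF_le:
  assumes "0 < kF"
  shows "real (card {p. pnorm p \<le> 2 * kF}) \<le> 146 * NF kF"
proof -
  have "real (card {p. pnorm p \<le> 2 * kF}) \<le> (4 * kF + 3)\<^sup>2"
    using card_lattice_disc_le[of "2 * kF"] assms by simp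
  also have "\<dots> \<le> 32 * kF\<^sup>2 + 18"
    using zero_le_power2[of "4 * kF - 3"] by (simp add: power2_eq_square algebra_simps)
  also have "\<dots> \<le> 146 * NF kF" using kF_sq_le_NF[OF assms] one_le_NF[OF assms] by linarith
  finally show ?thesis .
qed

lemma admissible_kF_dist_ge_half:
  assumes "admissible_kF kF"
  shows "1 / 2 \<le> \<bar>(pnorm p)\<^sup>2 - kF\<^sup>2\<bar>"
proof -
  define inner where "inner = (\<lambda>q. (pnorm q)\<^sup>2) ` fermi_ball kF"
  define outer where "outer = (\<lambda>q. (pnorm q)\<^sup>2) ` (- fermi_ball kF)"
  have "0 < kF" and kF_sq: "kF\<^sup>2 = (Inf outer + Sup inner) / 2"
    using assms by (simp_all add: admissible_kF_def inner_def outer_def)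
  have "finite inner" "inner \<noteq> {}"
    using finite_fermi_ball zero_mem_fermi_ball[OF \<open>0 < kF\<close>] by (auto simp: inner_def)
  then have "Sup inner \<in> inner" and le_Sup: "\<And>x. x \<in> inner \<Longrightarrow> x \<le> Sup inner"
    by (auto simp: cSup_eq_Max)
  then obtain q where q: "q \<in> fermi_ball kF" "Sup inner = of_int ((fst q)\<^sup>2 + (snd q)\<^sup>2)"
    by (auto simp: inner_def pnorm_sq)
  have "pnorm q < kF" using q(1) by (simp add: fermi_ball_def)
  then have "(pnorm q)\<^sup>2 < kF\<^sup>2" by (intro power_strict_mono) (auto simp: pnorm_def)
  then have "Sup inner < kF\<^sup>2" using q(2) by (simp add: pnorm_sq)
  have Sup_less: "Sup inner + 1 \<le> x" if x: "x \<in> outer" for x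
  proof -
    obtain p where "p \<notin> fermi_ball kF" "x = of_int ((fst p)\<^sup>2 + (snd p)\<^sup>2)"
      using x by (auto simp: outer_def pnorm_sq)
    then have "kF \<le> pnorm p" by (simp add: fermi_ball_def)
    then have "kF\<^sup>2 \<le> (pnorm p)\<^sup>2" using \<open>0 < kF\<close> by (intro power_mono) auto
    then have "kF\<^sup>2 \<le> x" using \<open>x = _\<close> by (simp add: pnorm_sq)
    then have "(fst q)\<^sup>2 + (snd q)\<^sup>2 < (fst p)\<^sup>2 + (snd p)\<^sup>2"
      using \<open>Sup inner < kF\<^sup>2\<close> q(2) \<open>x = _\<close>
      unfolding of_int_less_iff[symmetric, where 'a = real] by linarith
    then have "of_int ((fst q)\<^sup>2 + (snd q)\<^sup>2 + 1) \<le> (of_int ((fst p)\<^sup>2 + (snd p)\<^sup>2) :: real)"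
      by (simp only: of_int_le_iff)
    then show ?thesis using q(2) \<open>x = _\<close> by simp
  qed
  have "outer \<noteq> {}"
  proof -
    have "(\<lceil>kF\<rceil>, 0) \<notin> fermi_ball kF"
      using \<open>0 < kF\<close> by (simp add: fermi_ball_def pnorm_def not_less)
    then show ?thesis by (auto simp: outer_def)
  qed
  then have "Sup inner + 1 \<le> Inf outer" using Sup_less by (intro cInf_greatest)
  moreover have "Inf outer \<le> x" if "x \<in> outer" for x
    using that by (intro cInf_lower) (auto simp: outer_def intro: bdd_belowI[of _ 0])
  ultimately show ?thesis
    using kF_sq le_Sup by (cases "p \<in> fermi_ball kF") (force simp: inner_def outer_def)+
qed

lemma hbar_sq_mult_inverse_e_kin:
  assumes "0 < kF"
  shows "(hbar kF)\<^sup>2 * inverse (e_kin kF p) = 1 / \<bar>(pnorm p)\<^sup>2 - kF\<^sup>2\<bar>"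
proof -
  have "0 < hbar kF" using one_le_NF[OF assms] by (simp add: hbar_def)
  then show ?thesis by (simp add: e_kin_def field_simps)
qed

lemma sum_inverse_dist_sq_norm_le_powr:
  fixes \<epsilon> K :: real
  assumes "0 < \<epsilon>" "0 \<le> K"
  shows "\<exists>C>0. \<forall>X c (A :: (int \<times> int) set).
           1 \<le> X \<and> c \<le> K * X \<and> finite A \<and> card A \<le> K * X \<and>
           (\<forall>p\<in>A. 1 / 2 \<le> \<bar>(pnorm p)\<^sup>2 - c\<bar>) \<longrightarrow>
           (\<Sum>p\<in>A. 1 / \<bar>(pnorm p)\<^sup>2 - c\<bar>) \<le> C * X powr \<epsilon>"
proof -
  define \<delta> where "\<delta> = \<epsilon> / 2"
  have "0 < \<delta>" using assms by (simp add: \<delta>_def)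
  obtain C2 where C2: "1 \<le> C2"
    "\<And>n Y. real_of_int n \<le> Y \<Longrightarrow> 1 \<le> Y \<Longrightarrow> card (two_squares_reps n) \<le> C2 * Y powr \<delta>"
    using card_two_squares_reps_le_powr[OF \<open>0 < \<delta>\<close>] by blast
  define C' where "C' = 4 * C2 * (2 * K + 1) powr \<delta> * (1 + K powr \<delta> / \<delta>)"
  have "0 \<le> C'" using C2(1) \<open>0 < \<delta>\<close> by (simp add: C'_def)
  have "(\<Sum>p\<in>A. 1 / \<bar>(pnorm p)\<^sup>2 - c\<bar>) \<le> (2 + C') * X powr \<epsilon>"
    if X: "1 \<le> X" and "c \<le> K * X" "finite A" "card A \<le> K * X"
      and gap: "\<forall>p\<in>A. 1 / 2 \<le> \<bar>(pnorm p)\<^sup>2 - c\<bar>"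
    for X c and A :: "(int \<times> int) set"
  proof -
    define R where "R = C2 * (2 * K + 1) powr \<delta> * X powr \<delta>"
    have "card {p \<in> A. (fst p)\<^sup>2 + (snd p)\<^sup>2 = n} \<le> R" if "n \<le> c + card A + 1" for n :: int
    proof -
      have "card {p \<in> A. (fst p)\<^sup>2 + (snd p)\<^sup>2 = n} \<le> card (two_squares_reps n)"
        using finite_two_squares_reps by (intro card_mono) (auto simp: two_squares_reps_def)
      moreover have "real_of_int n \<le> (2 * K + 1) * X" "1 \<le> (2 * K + 1) * X"
        using that X \<open>c \<le> K * X\<close> \<open>card A \<le> K * X\<close> assms(2) by (auto simp: algebra_simps)
      ultimately show ?thesis
        using C2(2)[of n "(2 * K + 1) * X"] X assms(2) by (simp add: R_def powr_mult)
    qed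
    then have sum_le:
      "(\<Sum>p\<in>A. 1 / \<bar>of_int ((fst p)\<^sup>2 + (snd p)\<^sup>2) - c\<bar>) \<le> 2 + 4 * R * harm (card A)"
      using gap \<open>finite A\<close> unfolding pnorm_sq by (intro sum_inverse_dist_le_harm) auto
    have "real (card A) powr \<delta> / \<delta> \<le> (K * X) powr \<delta> / \<delta>"
      using \<open>card A \<le> K * X\<close> \<open>0 < \<delta>\<close> by (intro divide_right_mono powr_mono2) auto
    then have "harm (card A) \<le> 1 + (K * X) powr \<delta> / \<delta>"
      using harm_le_one_plus_powr[OF \<open>0 < \<delta>\<close>, of "card A"] by linarith
    also have "\<dots> \<le> (1 + K powr \<delta> / \<delta>) * X powr \<delta>"
      using X assms(2) ge_one_powr_ge_zero[OF X, of \<delta>] \<open>0 < \<delta>\<close>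
      by (simp add: powr_mult algebra_simps)
    finally have "4 * R * harm (card A) \<le> 4 * R * ((1 + K powr \<delta> / \<delta>) * X powr \<delta>)"
      using C2(1) by (intro mult_left_mono) (auto simp: R_def)
    also have "\<dots> = C' * (X powr \<delta> * X powr \<delta>)" by (simp add: R_def C'_def)
    also have "X powr \<delta> * X powr \<delta> = X powr \<epsilon>" by (simp add: \<delta>_def flip: powr_add)
    finally have "4 * R * harm (card A) \<le> C' * X powr \<epsilon>" .
    moreover have "1 \<le> X powr \<epsilon>" using X assms(1) by (intro ge_one_powr_ge_zero) auto
    ultimately show ?thesis using sum_le unfolding distrib_right pnorm_sq by linarith
  qed
  moreover have "0 < 2 + C'" using \<open>0 \<le> C'\<close> by simp
  ultimately show ?thesis by blast
qed

theorem lemmaA3: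
  fixes \<epsilon> :: real
  assumes "\<epsilon> > 0"
  shows "\<exists>C > 0. \<forall>kF (A :: (int \<times> int) set).
           admissible_kF kF \<and> finite A \<and> card A \<le> card {p. pnorm p \<le> 2 * kF} \<longrightarrow>
           (hbar kF)\<^sup>2 * (\<Sum>p\<in>A. inverse (e_kin kF p)) \<le> C * real (NF kF) powr \<epsilon>"
proof -
  obtain C where "0 < C" and C: "\<And>(X :: real) c (A :: (int \<times> int) set).
      \<lbrakk>1 \<le> X; c \<le> 146 * X; finite A; card A \<le> 146 * X; \<forall>p\<in>A. 1 / 2 \<le> \<bar>(pnorm p)\<^sup>2 - c\<bar>\<rbrakk>
      \<Longrightarrow> (\<Sum>p\<in>A. 1 / \<bar>(pnorm p)\<^sup>2 - c\<bar>) \<le> C * X powr \<epsilon>"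
    using sum_inverse_dist_sq_norm_le_powr[OF assms, of 146] by auto
  have "(hbar kF)\<^sup>2 * (\<Sum>p\<in>A. inverse (e_kin kF p)) \<le> C * real (NF kF) powr \<epsilon>"
    if "admissible_kF kF" "finite A" "card A \<le> card {p. pnorm p \<le> 2 * kF}"
    for kF and A :: "(int \<times> int) set"
  proof -
    have "0 < kF" using that(1) by (simp add: admissible_kF_def)
    have "(hbar kF)\<^sup>2 * (\<Sum>p\<in>A. inverse (e_kin kF p))
            = (\<Sum>p\<in>A. 1 / \<bar>(pnorm p)\<^sup>2 - kF\<^sup>2\<bar>)"
      using hbar_sq_mult_inverse_e_kin[OF \<open>0 < kF\<close>] by (simp add: sum_distrib_left)
    also have "\<dots> \<le> C * real (NF kF) powr \<epsilon>"
    proof (rule C)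
      show "1 \<le> real (NF kF)" "kF\<^sup>2 \<le> 146 * real (NF kF)"
        using one_le_NF[OF \<open>0 < kF\<close>] kF_sq_le_NF[OF \<open>0 < kF\<close>] by auto
      have "real (card A) \<le> real (card {p. pnorm p \<le> 2 * kF})" using that(3) by simp
      then show "real (card A) \<le> 146 * real (NF kF)"
        using card_lattice_disc_double_kF_le[OF \<open>0 < kF\<close>] by linarith
    qed (use that admissible_kF_dist_ge_half in auto)
    finally show ?thesis .
  qed
  with \<open>0 < C\<close> show ?thesis by blast
qed

end
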